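(* For twisted knot diagrams $K$ with an odd number of bars, each integer $a_n(K)$ ($n\in\mathbb{Z}$), equivalently the polynomial $T_o(K)=\sum_{n\in\mathbb{Z}}a_n(K)t^n$, is invariant under generalized Reidemeister moves and twisted Reidemeister moves, hence is a twisted knot invariant.
   Context: A twisted knot diagram is a virtual knot diagram with finitely many bars on its edges; twisted knots are equivalence classes under the generalized Reidemeister moves and the twisted moves $\Omega_1^t$ (a bar passes through a virtual crossing), $\Omega_2^t$ (two adjacent bars cancel), $\Omega_3^t$ (a real crossing is replaced by the crossing with over/under exchanged and a bar added on each of its four adjacent semiarcs); the parity of the number of bars is preserved. Segments are the pieces between real crossings and bars. A coloring by $(\mathbb{Z}, a\ast b=a\circ b=a+1, f(a)=-a)$ labels segments by integers so that at each real crossing, with $x$ the label of the under-strand segment to the right of the over-strand and $y$ the label of the over-strand segment to the right of the under-strand (right with respect to strand orientations), the other under-segment is labeled $x+1$ and the other over-segment $y+1$, and labels on the two sides of a bar are negatives of each other. When the number of bars is odd this coloring exists and is unique; the index of a real crossing $c$ is then $\mathrm{Ind}(c)=y-x$. With $w(c)$ the writhe and $w(K)=\sum_c w(c)$: $a_n(K)=\sum_{\mathrm{Ind}(c)=n}w(c)$ for $n\neq0$ and $a_0(K)=\sum_{\mathrm{Ind}(c)=0}w(c)-w(K)$. *)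

theory Defs
  imports Main
begin

text \<open>
  Twisted knot diagrams are encoded by their (twisted) Gauss data: the cyclic sequence of
  events met when travelling once along the oriented knot.  Virtual crossings
  leave no trace in this encoding.  The second component assigns to each crossing label
  its sign (True = positive crossing, writhe +1).
\<close>

datatype event = OverP nat | UnderP nat | Bar

type_synonym diagram = "event list \<times> (nat \<Rightarrow> bool)"

definition wf_diag :: "event list \<Rightarrow> bool" where
  "wf_diag w \<longleftrightarrow>
     (\<forall>c. count_list w (OverP c) = count_list w (UnderP c) \<and> count_list w (OverP c) \<le> 1)"

definition crossings :: "event list \<Rightarrow> nat set" where
  "crossings w = {c. OverP c \<in> set w}"

definition nbars :: "event list \<Rightarrow> nat" where
  "nbars w = count_list w Bar"

definition wr :: "(nat \<Rightarrow> bool) \<Rightarrow> nat \<Rightarrow> int" where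
  "wr s c = (if s c then 1 else -1)"

definition writhe :: "diagram \<Rightarrow> int" where
  "writhe D = (\<Sum>c\<in>crossings (fst D). wr (snd D) c)"

text \<open>Segment i is the piece of the knot right after event i; the segment before event i
  is segment prv n i (indices modulo the length n of the word).\<close>
definition prv :: "nat \<Rightarrow> nat \<Rightarrow> nat" where
  "prv n i = (i + n - 1) mod n"

text \<open>Colorings by (Z, a*b = a o b = a+1, f(a) = -a).  At a positive crossing the under
  segment to the right of the over strand is the incoming under segment and the over
  segment to the right of the under strand is the outgoing over segment; at a negative
  crossing these are the outgoing under segment and the incoming over segment.  Hence
  along the under strand the label changes by +w(c), along the over strand by -w(c), and
  across a bar it is negated.\<close>
definition is_coloring :: "diagram \<Rightarrow> int list \<Rightarrow> bool" where
  "is_coloring D col \<longleftrightarrow>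
     length col = length (fst D) \<and>
     (\<forall>i < length (fst D).
        (case fst D ! i of
           Bar \<Rightarrow> col ! i = - (col ! prv (length (fst D)) i)
         | UnderP c \<Rightarrow> col ! i = col ! prv (length (fst D)) i + wr (snd D) c
         | OverP c \<Rightarrow> col ! i = col ! prv (length (fst D)) i - wr (snd D) c))"

definition coloring :: "diagram \<Rightarrow> int list" where
  "coloring D = (THE col. is_coloring D col)"

definition pos :: "event list \<Rightarrow> event \<Rightarrow> nat" where
  "pos w e = (THE i. i < length w \<and> w ! i = e)"

text \<open>Ind(c) = y - x.  Positive: y = outgoing over label, x = incoming under label.
  Negative: y = incoming over label, x = outgoing under label.\<close>
definition ind :: "diagram \<Rightarrow> nat \<Rightarrow> int" where
  "ind D c =
     (let w = fst D; col = coloring D; n = length w;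
          i = pos w (OverP c); j = pos w (UnderP c)
      in if snd D c then col ! i - col ! prv n j
         else col ! prv n i - col ! j)"

definition acoef :: "diagram \<Rightarrow> int \<Rightarrow> int" where
  "acoef D n =
     (\<Sum>c\<in>{c \<in> crossings (fst D). ind D c = n}. wr (snd D) c)
     - (if n = 0 then writhe D else 0)"

definition agree :: "nat set \<Rightarrow> (nat \<Rightarrow> bool) \<Rightarrow> (nat \<Rightarrow> bool) \<Rightarrow> bool" where
  "agree A s s' \<longleftrightarrow> (\<forall>c\<in>A. s c = s' c)"

fun map_ev :: "(nat \<Rightarrow> nat) \<Rightarrow> event \<Rightarrow> event" where
  "map_ev f (OverP c) = OverP (f c)"
| "map_ev f (UnderP c) = UnderP (f c)"
| "map_ev f Bar = Bar"

text \<open>Trivial identifications of Gauss data (same diagram): rotation of the cyclic word,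
  renaming of crossings, changing signs of labels that are not crossings.\<close>
definition triv_move :: "diagram \<Rightarrow> diagram \<Rightarrow> bool" where
  "triv_move D D' \<longleftrightarrow>
     (fst D' = rotate1 (fst D) \<and> snd D' = snd D)
   \<or> (\<exists>f. inj f \<and> fst D' = map (map_ev f) (fst D) \<and> (\<forall>c. snd D' (f c) = snd D c))
   \<or> (fst D' = fst D \<and> agree (crossings (fst D)) (snd D) (snd D'))"

text \<open>Reidemeister move I (all four oriented versions).\<close>
definition R1_move :: "diagram \<Rightarrow> diagram \<Rightarrow> bool" where
  "R1_move D D' \<longleftrightarrow>
     (\<exists>A B c. fst D = A @ B \<and> c \<notin> crossings (fst D) \<and>
        (fst D' = A @ [OverP c, UnderP c] @ B \<or> fst D' = A @ [UnderP c, OverP c] @ B) \<and>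
        agree (crossings (fst D)) (snd D) (snd D'))"

text \<open>Reidemeister move II: one strand passes over another twice; the two new crossings
  have opposite signs; the two strands run in the same or opposite directions.\<close>
definition R2_move :: "diagram \<Rightarrow> diagram \<Rightarrow> bool" where
  "R2_move D D' \<longleftrightarrow>
     (\<exists>A B C c d. fst D = A @ B @ C \<and> c \<noteq> d \<and>
        c \<notin> crossings (fst D) \<and> d \<notin> crossings (fst D) \<and>
        (fst D' = A @ [OverP c, OverP d] @ B @ [UnderP c, UnderP d] @ C \<or>
         fst D' = A @ [OverP c, OverP d] @ B @ [UnderP d, UnderP c] @ C) \<and>
        snd D' c \<noteq> snd D' d \<and>
        agree (crossings (fst D)) (snd D) (snd D'))"

text \<open>Crossings a (top over middle), b (top over bottom) and
  c (middle over bottom).  Each of the three strands carries two consecutive events; the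
  move reverses the order on each strand and keeps all signs.  The admissible orders are
  exactly those realised by three oriented lines in the plane forming a small triangle:
  for some e in {1,-1}, on the top strand a precedes b iff e = -w(b), on the middle strand
  a precedes c iff e = -w(c), on the bottom strand b precedes c iff e = -w(a)w(b)w(c).\<close>
definition R3_pairs :: "(nat \<Rightarrow> bool) \<Rightarrow> int \<Rightarrow> nat \<Rightarrow> nat \<Rightarrow> nat \<Rightarrow>
    event list \<times> event list \<times> event list" where
  "R3_pairs s e a b c =
     ((if e = - wr s b then [OverP a, OverP b] else [OverP b, OverP a]),
      (if e = - wr s c then [UnderP a, OverP c] else [OverP c, UnderP a]),
      (if e = - (wr s a * wr s b * wr s c) then [UnderP b, UnderP c] else [UnderP c, UnderP b]))"

definition R3_move :: "diagram \<Rightarrow> diagram \<Rightarrow> bool" where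
  "R3_move D D' \<longleftrightarrow>
     snd D' = snd D \<and>
     (\<exists>e a b c pT pM pB A B C E X1 X2 X3.
        e \<in> {1, -1} \<and> R3_pairs (snd D) e a b c = (pT, pM, pB) \<and>
        (X1, X2, X3) \<in> {(pT, pM, pB), (pT, pB, pM), (pM, pT, pB),
                         (pM, pB, pT), (pB, pT, pM), (pB, pM, pT)} \<and>
        fst D = A @ X1 @ B @ X2 @ C @ X3 @ E \<and>
        fst D' = A @ rev X1 @ B @ rev X2 @ C @ rev X3 @ E)"

definition T2_move :: "diagram \<Rightarrow> diagram \<Rightarrow> bool" where
  "T2_move D D' \<longleftrightarrow> snd D' = snd D \<and>
     (\<exists>A B. fst D = A @ [Bar, Bar] @ B \<and> fst D' = A @ B)"

text \<open>Twisted move III: over/under information of crossing c is exchanged and a bar is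
  put on each of the four semiarcs adjacent to c (the sign of c, computed from the
  resulting diagram, is unchanged).\<close>
definition T3_move :: "diagram \<Rightarrow> diagram \<Rightarrow> bool" where
  "T3_move D D' \<longleftrightarrow> snd D' = snd D \<and>
     (\<exists>A B C c.
        (fst D = A @ [OverP c] @ B @ [UnderP c] @ C \<and>
         fst D' = A @ [Bar, UnderP c, Bar] @ B @ [Bar, OverP c, Bar] @ C)
      \<or> (fst D = A @ [UnderP c] @ B @ [OverP c] @ C \<and>
         fst D' = A @ [Bar, OverP c, Bar] @ B @ [Bar, UnderP c, Bar] @ C))"

text \<open>Virtual Reidemeister moves, the mixed move and twisted move I do not change the
  Gauss data, so they are identities in this encoding.\<close>
definition tw_step :: "diagram \<Rightarrow> diagram \<Rightarrow> bool" where
  "tw_step D D' \<longleftrightarrow> wf_diag (fst D) \<and> wf_diag (fst D') \<and>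
     (triv_move D D' \<or> R1_move D D' \<or> R2_move D D' \<or> R3_move D D' \<or>
      T2_move D D' \<or> T3_move D D')"

inductive tw_equiv :: "diagram \<Rightarrow> diagram \<Rightarrow> bool" where
  refl: "tw_equiv D D"
| step: "tw_step D D' \<Longrightarrow> tw_equiv D D'"
| sym: "tw_equiv D D' \<Longrightarrow> tw_equiv D' D"
| trans: "tw_equiv D D' \<Longrightarrow> tw_equiv D' D'' \<Longrightarrow> tw_equiv D D''"

end

theory Submission
  imports Defs
begin

text \<open>Travelling once along the knot, every event acts on labels by an affine map of
  \<int>: a passage of a crossing c by a translation by \<plusminus>w(c), a bar by negation.  A
  coloring is a fixed point of the composite map around the whole word.  With an odd
  number of bars this composite is x \<mapsto> 2k - x (the constant is even because the real
  events come in pairs), so the coloring exists and is unique.  The index of c is the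
  difference of the labels met just before its over- and its under-passage, minus w(c).
  Hence a move preserves the index of an old crossing as soon as it preserves the
  composite maps of the subwords it changes and the labels reaching the passages it does
  not touch.  The new crossings of R1 and R2 have index 0, respectively equal indices and
  opposite writhes, so they contribute nothing to any a_n.  R3 permutes commuting
  translations so that both passages of each crossing are shifted by the same amount, two
  adjacent bars compose to the identity, and T3 swaps the two passages of a crossing while
  conjugating them by negation, which keeps the difference of their labels.\<close>

section \<open>Transport of labels along a word\<close>

fun label_step :: "(nat \<Rightarrow> bool) \<Rightarrow> event \<Rightarrow> int \<Rightarrow> int" where
  "label_step s (OverP c) x = x - wr s c"
| "label_step s (UnderP c) x = x + wr s c"
| "label_step s Bar x = - x"

abbreviation walk :: "(nat \<Rightarrow> bool) \<Rightarrow> event list \<Rightarrow> int \<Rightarrow> int" where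
  "walk s \<equiv> fold (label_step s)"

text \<open>The label of the segment before the first event, which is also the segment after
  the last one.\<close>
definition base_label :: "(nat \<Rightarrow> bool) \<Rightarrow> event list \<Rightarrow> int" where
  "base_label s w = (THE x. walk s w x = x)"

definition walk_to :: "(nat \<Rightarrow> bool) \<Rightarrow> event list \<Rightarrow> event \<Rightarrow> int \<Rightarrow> int" where
  "walk_to s w e = walk s (takeWhile (\<lambda>x. x \<noteq> e) w)"

text \<open>Unlike ind, this expression of the index needs no case distinction on the sign
  of c.\<close>
definition gauss_ind :: "(nat \<Rightarrow> bool) \<Rightarrow> event list \<Rightarrow> nat \<Rightarrow> int" where
  "gauss_ind s w c =
     walk_to s w (OverP c) (base_label s w) - walk_to s w (UnderP c) (base_label s w) - wr s c"

definition gauss_coef :: "(nat \<Rightarrow> bool) \<Rightarrow> event list \<Rightarrow> int \<Rightarrow> int" where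
  "gauss_coef s w n = (\<Sum>c\<in>crossings w. if gauss_ind s w c = n then wr s c else 0)
     - (if n = 0 then (\<Sum>c\<in>crossings w. wr s c) else 0)"

lemma odd_wr: "odd (wr s c)"
  by (simp add: wr_def)

lemma walk_to_Nil [simp]: "walk_to s [] e = id"
  by (simp add: walk_to_def)

lemma walk_to_Cons [simp]:
  "walk_to s (x # w) e = (if x = e then id else walk_to s w e \<circ> label_step s x)"
  by (simp add: walk_to_def)

lemma walk_to_append:
  "walk_to s (P @ Q) e = (if e \<in> set P then walk_to s P e else walk_to s Q e \<circ> walk s P)"
  by (induction P) auto

lemma walk_affine:
  "walk s w x = (if even (nbars w) then x else - x) + walk s w 0"
proof (induction w arbitrary: x)
  case Nil
  then show ?case by (simp add: nbars_def)
next
  case (Cons e w)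
  show ?case using Cons.IH[of "label_step s e x"] Cons.IH[of "label_step s e 0"]
    by (cases e) (auto simp: nbars_def)
qed

lemma walk_parity:
  "even (walk s w x + x + int (length (filter (\<lambda>e. e \<noteq> Bar) w)))"
proof (induction w arbitrary: x)
  case (Cons e w)
  show ?case
    using Cons.IH[of "label_step s e x"] by (cases e) (auto simp: even_add odd_wr)
qed simp

lemma finite_crossings: "finite (crossings w)"
proof -
  have "crossings w \<subseteq> (\<lambda>e. case e of OverP c \<Rightarrow> c | _ \<Rightarrow> 0) ` set w"
    unfolding crossings_def by force
  then show ?thesis using finite_surj by blast
qed

lemma wf_diag_UnderP_iff:
  assumes "wf_diag w"
  shows "UnderP c \<in> set w \<longleftrightarrow> c \<in> crossings w"
  using assms unfolding wf_diag_def crossings_def by (metis count_list_0_iff mem_Collect_eq)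

lemma wf_diag_count_le_1:
  assumes "wf_diag w" "e \<noteq> Bar"
  shows "count_list w e \<le> 1"
  using assms unfolding wf_diag_def by (cases e) (simp_all, metis+)

lemma wf_diag_notin_rest:
  assumes "wf_diag w" "w = P @ Y @ Q" "e \<in> set Y" "e \<noteq> Bar"
  shows "e \<notin> set P" "e \<notin> set Q"
proof -
  have "count_list Y e \<noteq> 0" using assms(3) by (simp add: count_list_0_iff)
  then have "count_list P e = 0 \<and> count_list Q e = 0"
    using wf_diag_count_le_1[OF assms(1,4)] assms(2) by simp
  then show "e \<notin> set P" "e \<notin> set Q" by (simp_all add: count_list_0_iff)
qed

lemma wf_diag_even_real_events:
  assumes "wf_diag w"
  shows "even (length (filter (\<lambda>e. e \<noteq> Bar) w))"
proof -
  let ?C = "crossings w" and ?R = "filter (\<lambda>e. e \<noteq> Bar) w"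
  have real: "set ?R \<subseteq> OverP ` ?C \<union> UnderP ` ?C"
  proof
    fix e assume "e \<in> set ?R"
    then have "e \<in> set w" "e \<noteq> Bar" by auto
    show "e \<in> OverP ` ?C \<union> UnderP ` ?C"
    proof (cases e)
      case (UnderP c)
      then show ?thesis using \<open>e \<in> set w\<close> wf_diag_UnderP_iff[OF assms, of c] by auto
    qed (use \<open>e \<in> set w\<close> \<open>e \<noteq> Bar\<close> in \<open>auto simp: crossings_def\<close>)
  qed
  have "length ?R = sum (count_list ?R) (OverP ` ?C \<union> UnderP ` ?C)"
    using sum_count_set[OF real] finite_crossings by simp
  also have "\<dots> = sum (count_list w) (OverP ` ?C \<union> UnderP ` ?C)"
    by (intro sum.cong refl)
      (auto simp: count_list_eq_length_filter intro!: arg_cong[where f = length] filter_cong)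
  also have "\<dots> = (\<Sum>c\<in>?C. count_list w (OverP c)) + (\<Sum>c\<in>?C. count_list w (UnderP c))"
    by (subst sum.union_disjoint) (auto simp: finite_crossings sum.reindex inj_on_def)
  also have "\<dots> = 2 * (\<Sum>c\<in>?C. count_list w (OverP c))"
    using assms unfolding wf_diag_def by simp
  finally show ?thesis by simp
qed

lemma walk_unique_fixed_point:
  assumes "wf_diag w" "odd (nbars w)"
  shows "\<exists>!x. walk s w x = x"
proof -
  have "even (walk s w 0)"
    using walk_parity[of s w 0] wf_diag_even_real_events[OF assms(1)] by simp
  then obtain k where "walk s w 0 = 2 * k" by blast
  then have "walk s w x = 2 * k - x" for x
    using walk_affine[of s w x] assms(2) by simp
  then show ?thesis by auto
qed

lemma walk_base_label:
  assumes "wf_diag w" "odd (nbars w)"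
  shows "walk s w (base_label s w) = base_label s w"
  unfolding base_label_def by (rule theI'[OF walk_unique_fixed_point[OF assms]])

lemma base_label_eqI:
  assumes "wf_diag w" "odd (nbars w)" "walk s w x = x"
  shows "base_label s w = x"
  unfolding base_label_def by (rule the1_equality[OF walk_unique_fixed_point[OF assms(1,2)] assms(3)])

lemma base_label_cong: "walk s w = walk s' w' \<Longrightarrow> base_label s w = base_label s' w'"
  by (simp add: base_label_def)

section \<open>The coloring and the index\<close>

definition walk_coloring :: "(nat \<Rightarrow> bool) \<Rightarrow> event list \<Rightarrow> int list" where
  "walk_coloring s w = map (\<lambda>i. walk s (take (Suc i) w) (base_label s w)) [0..<length w]"

lemma prv_eq_pred: "0 < i \<Longrightarrow> i < n \<Longrightarrow> prv n i = i - 1"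
  unfolding prv_def by (metis Nat.add_diff_assoc2 One_nat_def Suc_leI add.commute
    less_imp_diff_less mod_add_self2 mod_less)

lemma prv_0: "0 < n \<Longrightarrow> prv n 0 = n - 1"
  by (simp add: prv_def)

lemma label_step_iff_case:
  "a = label_step s e b \<longleftrightarrow>
     (case e of Bar \<Rightarrow> a = - b | UnderP c \<Rightarrow> a = b + wr s c | OverP c \<Rightarrow> a = b - wr s c)"
  by (cases e) auto

lemma walk_coloring_nth:
  "i < length w \<Longrightarrow>
     walk_coloring s w ! i = label_step s (w ! i) (walk s (take i w) (base_label s w))"
  by (simp add: walk_coloring_def take_Suc_conv_app_nth)

lemma walk_coloring_prv:
  assumes "wf_diag w" "odd (nbars w)" "i < length w"
  shows "walk_coloring s w ! prv (length w) i = walk s (take i w) (base_label s w)"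
proof (cases "i = 0")
  case True
  then show ?thesis
    using assms walk_base_label[OF assms(1,2)] by (simp add: prv_0 walk_coloring_def)
next
  case False
  then have "i - 1 < length w" "Suc (i - 1) = i" using assms(3) by auto
  then show ?thesis using assms(3) False by (simp add: prv_eq_pred walk_coloring_def)
qed

lemma is_coloring_walk_coloring:
  assumes "wf_diag w" "odd (nbars w)"
  shows "is_coloring (w, s) (walk_coloring s w)"
  unfolding is_coloring_def fst_conv snd_conv label_step_iff_case[symmetric]
  using walk_coloring_prv[OF assms] walk_coloring_nth by (simp add: walk_coloring_def)

lemma is_coloring_unique:
  assumes "wf_diag w" "odd (nbars w)" "is_coloring (w, s) col"
  shows "col = walk_coloring s w"
proof -
  let ?n = "length w"
  have n: "0 < ?n" using assms(2) by (cases w) (auto simp: nbars_def)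
  have len: "length col = ?n"
    and step: "\<And>i. i < ?n \<Longrightarrow> col ! i = label_step s (w ! i) (col ! prv ?n i)"
    using assms(3) unfolding is_coloring_def fst_conv snd_conv label_step_iff_case by auto
  define y where "y = col ! (?n - 1)"
  have col: "col ! i = walk s (take (Suc i) w) y" if "i < ?n" for i
    using that
  proof (induction i)
    case 0
    then show ?case using step[of 0] n by (simp add: prv_0 y_def take_Suc_conv_app_nth)
  next
    case (Suc i)
    then show ?case using step[of "Suc i"] by (simp add: prv_eq_pred take_Suc_conv_app_nth)
  qed
  have "walk s w y = y" using col[of "?n - 1"] n by (simp add: y_def)
  then have "base_label s w = y" by (rule base_label_eqI[OF assms(1,2)])
  then show ?thesis using col len by (intro nth_equalityI) (auto simp: walk_coloring_def)
qed

lemma coloring_eq_walk_coloring: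
  assumes "wf_diag w" "odd (nbars w)"
  shows "coloring (w, s) = walk_coloring s w"
  unfolding coloring_def
  using is_coloring_walk_coloring[OF assms] is_coloring_unique[OF assms] by (rule the_equality)

lemma pos_eq_length:
  assumes "wf_diag w" "w = P @ e # Q" "e \<noteq> Bar"
  shows "pos w e = length P"
  unfolding pos_def
proof (rule the_equality)
  show "length P < length w \<and> w ! length P = e" using assms(2) by simp
  have "e \<notin> set P" "e \<notin> set Q" using wf_diag_notin_rest[OF assms(1), of P "[e]" Q] assms(2,3) by auto
  then show "i = length P" if "i < length w \<and> w ! i = e" for i
    using that assms(2) by (auto simp: nth_append nth_Cons' split: if_splits)
qed

lemma pos_of_real_event:
  assumes "wf_diag w" "e \<in> set w" "e \<noteq> Bar"
  shows "pos w e < length w" "w ! pos w e = e" "walk_to s w e = walk s (take (pos w e) w)"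
proof -
  obtain P Q where w: "w = P @ e # Q" "e \<notin> set P" using split_list_first[OF assms(2)] by blast
  have "pos w e = length P" using pos_eq_length[OF assms(1) w(1) assms(3)] .
  then show "pos w e < length w" "w ! pos w e = e" "walk_to s w e = walk s (take (pos w e) w)"
    using w by (simp_all add: walk_to_append)
qed

lemma ind_eq_gauss_ind:
  assumes "wf_diag w" "odd (nbars w)" "c \<in> crossings w"
  shows "ind (w, s) c = gauss_ind s w c"
proof -
  have "OverP c \<in> set w" "UnderP c \<in> set w"
    using assms(3) wf_diag_UnderP_iff[OF assms(1)] by (auto simp: crossings_def)
  note over = pos_of_real_event[OF assms(1) this(1) event.distinct(3)]
    and under = pos_of_real_event[OF assms(1) this(2) event.distinct(5)]
  show ?thesis
    unfolding ind_def gauss_ind_def Let_def fst_conv snd_conv coloring_eq_walk_coloring[OF assms(1,2)]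
    using walk_coloring_prv[OF assms(1,2) over(1)] walk_coloring_prv[OF assms(1,2) under(1)]
      walk_coloring_nth[OF over(1)] walk_coloring_nth[OF under(1)] over under
    by (simp add: wr_def)
qed

lemma acoef_eq_gauss_coef:
  assumes "wf_diag w" "odd (nbars w)"
  shows "acoef (w, s) n = gauss_coef s w n"
proof -
  have "(\<Sum>c\<in>{c \<in> crossings w. ind (w, s) c = n}. wr s c)
      = (\<Sum>c\<in>crossings w. if ind (w, s) c = n then wr s c else 0)"
    by (simp add: sum.inter_filter finite_crossings)
  also have "\<dots> = (\<Sum>c\<in>crossings w. if gauss_ind s w c = n then wr s c else 0)"
    by (rule sum.cong) (auto simp: ind_eq_gauss_ind[OF assms])
  finally show ?thesis unfolding acoef_def gauss_coef_def writhe_def by simp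
qed

section \<open>Invariance under the moves\<close>

lemma gauss_coef_add_crossings:
  assumes "finite N" "crossings w' = crossings w \<union> N" "crossings w \<inter> N = {}"
    and ind: "\<And>c. c \<in> crossings w \<Longrightarrow> gauss_ind s w' c = gauss_ind s w c"
    and new: "(\<Sum>c\<in>N. if gauss_ind s w' c = n then wr s c else 0)
       = (if n = 0 then (\<Sum>c\<in>N. wr s c) else 0)"
  shows "gauss_coef s w' n = gauss_coef s w n"
proof -
  have split: "sum f (crossings w') = sum f (crossings w) + sum f N" for f :: "nat \<Rightarrow> int"
    unfolding assms(2) using finite_crossings assms(1,3) by (rule sum.union_disjoint)
  have "(\<Sum>c\<in>crossings w. if gauss_ind s w' c = n then wr s c else 0)
      = (\<Sum>c\<in>crossings w. if gauss_ind s w c = n then wr s c else 0)"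
    by (rule sum.cong) (simp_all add: ind)
  then show ?thesis unfolding gauss_coef_def split new by simp
qed

lemma gauss_coef_cong:
  assumes "crossings w' = crossings w"
    and "\<And>c. c \<in> crossings w \<Longrightarrow> gauss_ind s w' c = gauss_ind s w c"
  shows "gauss_coef s w' n = gauss_coef s w n"
  using gauss_coef_add_crossings[of "{}" w' w s n] assms by simp

lemma gauss_ind_replace:
  assumes "walk s M' = walk s M"
    and "OverP c \<notin> set M" "OverP c \<notin> set M'" "UnderP c \<notin> set M" "UnderP c \<notin> set M'"
  shows "gauss_ind s (L @ M' @ R) c = gauss_ind s (L @ M @ R) c"
proof -
  have "base_label s (L @ M' @ R) = base_label s (L @ M @ R)"
    by (rule base_label_cong) (simp add: assms(1))
  then show ?thesis using assms by (simp add: gauss_ind_def walk_to_append)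
qed

lemma gauss_coef_agree:
  assumes "wf_diag w" "agree (crossings w) s s'"
  shows "gauss_coef s' w n = gauss_coef s w n"
proof -
  have wr_eq: "wr s' c = wr s c" if "c \<in> crossings w" for c
    using assms(2) that by (simp add: agree_def wr_def)
  have step: "label_step s' e = label_step s e" if "e \<in> set w" for e
    by (cases e) (use that wr_eq wf_diag_UnderP_iff[OF assms(1)] in \<open>auto simp: crossings_def\<close>)
  have walk: "walk s' (takeWhile P w) = walk s (takeWhile P w)" for P
    by (intro ext fold_cong) (auto dest: set_takeWhileD simp: step)
  have "walk s' w = walk s w" by (intro ext fold_cong) (auto simp: step)
  then have base: "base_label s' w = base_label s w" by (rule base_label_cong)
  have "gauss_ind s' w c = gauss_ind s w c" if "c \<in> crossings w" for c
    using that wr_eq unfolding gauss_ind_def walk_to_def walk base by simp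
  then show ?thesis unfolding gauss_coef_def using wr_eq by (simp cong: sum.cong if_cong)
qed

lemma count_list_rotate1: "count_list (rotate1 w) e = count_list w e"
  by (cases w) auto

lemma wf_diag_rotate1: "wf_diag (rotate1 w) = wf_diag w"
  by (simp add: wf_diag_def count_list_rotate1)

lemma gauss_coef_rotate1:
  assumes "wf_diag w" "odd (nbars w)"
  shows "gauss_coef s (rotate1 w) n = gauss_coef s w n"
proof -
  obtain e0 u where w: "w = e0 # u" using assms(2) by (cases w) (auto simp: nbars_def)
  then have rot: "rotate1 w = u @ [e0]" by simp
  let ?x = "base_label s w"
  have fixed: "walk s w ?x = ?x" by (rule walk_base_label[OF assms])
  have "wf_diag (rotate1 w)" "odd (nbars (rotate1 w))"
    using assms by (simp_all add: wf_diag_rotate1 nbars_def count_list_rotate1)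
  moreover have "walk s (rotate1 w) (label_step s e0 ?x) = label_step s e0 ?x"
    using fixed by (simp add: rot w)
  ultimately have "base_label s (rotate1 w) = label_step s e0 ?x"
    by (rule base_label_eqI)
  moreover have "walk_to s (rotate1 w) e (label_step s e0 ?x) = walk_to s w e ?x"
    if "e \<in> set w" "e \<noteq> Bar" for e
  proof (cases "e = e0")
    case True
    then have "e \<notin> set u" using wf_diag_notin_rest[OF assms(1), of "[]" "[e]" u] w that(2) by simp
    then show ?thesis using True fixed by (simp add: rot w walk_to_append)
  next
    case False
    then show ?thesis using that by (simp add: rot w walk_to_append)
  qed
  ultimately have "gauss_ind s (rotate1 w) c = gauss_ind s w c" if "c \<in> crossings w" for c
    using that wf_diag_UnderP_iff[OF assms(1), of c] by (simp add: gauss_ind_def crossings_def)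
  then show ?thesis by (intro gauss_coef_cong) (auto simp: rot w crossings_def)
qed

lemma inj_map_ev:
  assumes "inj f"
  shows "inj (map_ev f)"
proof (rule injI)
  fix x y assume "map_ev f x = map_ev f y"
  then show "x = y" using assms by (cases x; cases y) (auto dest: injD)
qed

lemma gauss_coef_rename:
  assumes "inj f" "\<And>c. s' (f c) = s c"
  shows "gauss_coef s' (map (map_ev f) w) n = gauss_coef s w n"
proof -
  have wr_eq: "wr s' (f c) = wr s c" for c using assms(2) by (simp add: wr_def)
  have step: "label_step s' (map_ev f e) = label_step s e" for e
    by (cases e) (simp_all add: fun_eq_iff wr_eq)
  have walk: "walk s' (map (map_ev f) xs) = walk s xs" for xs
    by (simp add: fold_map comp_def step)
  have walk_to: "walk_to s' (map (map_ev f) w) (map_ev f e) = walk_to s w e" for e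
  proof -
    have "(\<lambda>x. x \<noteq> map_ev f e) \<circ> map_ev f = (\<lambda>x. x \<noteq> e)"
      using inj_map_ev[OF assms(1)] by (auto simp: inj_eq)
    then show ?thesis by (simp add: walk_to_def takeWhile_map walk)
  qed
  then have ind: "gauss_ind s' (map (map_ev f) w) (f c) = gauss_ind s w c" for c
    using walk_to[of "OverP c"] walk_to[of "UnderP c"] base_label_cong[OF walk]
    by (simp add: gauss_ind_def wr_eq)
  have "OverP d = map_ev f x \<longleftrightarrow> (\<exists>c. x = OverP c \<and> d = f c)" for d x
    by (cases x) auto
  then have "crossings (map (map_ev f) w) = f ` crossings w"
    by (auto simp: crossings_def)
  then show ?thesis
    unfolding gauss_coef_def using inj_on_subset[OF assms(1) subset_UNIV]
    by (simp add: sum.reindex ind wr_eq cong: if_cong)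
qed

lemma gauss_coef_T2_move:
  assumes "T2_move (w, s) (w', s')"
  shows "gauss_coef s' w' n = gauss_coef s w n"
proof -
  obtain A B where s: "s' = s" and w: "w = A @ [Bar, Bar] @ B" "w' = A @ [] @ B"
    using assms unfolding T2_move_def by auto
  have "walk s [] = walk s [Bar, Bar]" by (auto simp: fun_eq_iff)
  then show ?thesis unfolding s w
    by (intro gauss_coef_cong gauss_ind_replace) (auto simp: crossings_def)
qed

lemma gauss_coef_R1_move:
  assumes "R1_move (w, s) (w', s')" "wf_diag w"
  shows "gauss_coef s' w' n = gauss_coef s w n"
proof -
  obtain A B c M where w: "w = A @ [] @ B" "w' = A @ M @ B"
    and M: "M = [OverP c, UnderP c] \<or> M = [UnderP c, OverP c]"
    and c: "c \<notin> crossings w" and s: "agree (crossings w) s s'"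
    using assms(1) unfolding R1_move_def by auto
  have walk_M: "walk s' M = walk s' []" using M by (auto simp: fun_eq_iff)
  have "OverP c \<notin> set A" "UnderP c \<notin> set A"
    using c w(1) wf_diag_UnderP_iff[OF assms(2)] by (auto simp: crossings_def)
  then have "gauss_ind s' w' c = 0" using M by (auto simp: w(2) gauss_ind_def walk_to_append)
  then have "gauss_coef s' w' n = gauss_coef s' w n"
    using c M unfolding w
    by (intro gauss_coef_add_crossings[of "{c}"] gauss_ind_replace[OF walk_M])
      (auto simp: crossings_def)
  also have "\<dots> = gauss_coef s w n" by (rule gauss_coef_agree[OF assms(2) s])
  finally show ?thesis .
qed

lemma gauss_coef_R2_move:
  assumes "R2_move (w, s) (w', s')" "wf_diag w"
  shows "gauss_coef s' w' n = gauss_coef s w n"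
proof -
  obtain A B C c d M where w: "w = A @ B @ C" and w': "w' = A @ [OverP c, OverP d] @ B @ M @ C"
    and M: "M = [UnderP c, UnderP d] \<or> M = [UnderP d, UnderP c]"
    and cd: "c \<noteq> d" "c \<notin> crossings w" "d \<notin> crossings w" "s' c \<noteq> s' d"
    and s: "agree (crossings w) s s'"
    using assms(1) unfolding R2_move_def fst_conv snd_conv by blast
  have opp: "wr s' d = - wr s' c" using cd(4) by (auto simp: wr_def)
  have walk_O: "walk s' [OverP c, OverP d] = walk s' []"
    and walk_M: "walk s' M = walk s' []" using M opp by (auto simp: fun_eq_iff)
  have "OverP c \<notin> set (A @ B)" "OverP d \<notin> set (A @ B)"
    "UnderP c \<notin> set (A @ B)" "UnderP d \<notin> set (A @ B)"
    using cd(2,3) w wf_diag_UnderP_iff[OF assms(2)] by (auto simp: crossings_def)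
  then have fresh: "OverP c \<notin> set A" "OverP d \<notin> set A" "UnderP c \<notin> set A" "UnderP d \<notin> set A"
    "OverP c \<notin> set B" "OverP d \<notin> set B" "UnderP c \<notin> set B" "UnderP d \<notin> set B"
    by auto
  have "gauss_ind s' w' c = gauss_ind s' w' d"
    using M fresh cd(1) opp by (auto simp: w' gauss_ind_def walk_to_append)
  then have new: "(\<Sum>k\<in>{c, d}. if gauss_ind s' w' k = n then wr s' k else 0)
      = (if n = 0 then (\<Sum>k\<in>{c, d}. wr s' k) else 0)"
    using cd(1) opp by simp
  have "gauss_ind s' w' k = gauss_ind s' w k" if "k \<in> crossings w" for k
  proof -
    have "k \<noteq> c" "k \<noteq> d" using that cd(2,3) by auto
    then have "gauss_ind s' ((A @ [OverP c, OverP d] @ B) @ M @ C) k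
        = gauss_ind s' ((A @ [OverP c, OverP d] @ B) @ [] @ C) k"
      and "gauss_ind s' (A @ [OverP c, OverP d] @ (B @ C)) k = gauss_ind s' (A @ [] @ (B @ C)) k"
      using M by (intro gauss_ind_replace walk_O walk_M; auto)+
    then show ?thesis by (simp add: w w')
  qed
  then have "gauss_coef s' w' n = gauss_coef s' w n"
    using cd(2,3) new M by (intro gauss_coef_add_crossings) (auto simp: w w' crossings_def)
  also have "\<dots> = gauss_coef s w n" by (rule gauss_coef_agree[OF assms(2) s])
  finally show ?thesis .
qed

fun flip_ev :: "event \<Rightarrow> event" where
  "flip_ev (OverP c) = UnderP c"
| "flip_ev (UnderP c) = OverP c"
| "flip_ev Bar = Bar"

lemma walk_bar_flip_bar: "walk s [Bar, flip_ev e, Bar] = walk s [e]"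
  by (cases e) (auto simp: fun_eq_iff)

lemma gauss_coef_flip_crossing:
  assumes "wf_diag w"
    and xy: "(x, y) = (OverP c, UnderP c) \<or> (x, y) = (UnderP c, OverP c)"
    and w: "w = A @ [x] @ B @ [y] @ C"
    and w': "w' = A @ [Bar, flip_ev x, Bar] @ B @ [Bar, flip_ev y, Bar] @ C"
  shows "gauss_coef s w' n = gauss_coef s w n"
proof -
  have fresh: "x \<notin> set A" "x \<notin> set B" "y \<notin> set A" "y \<notin> set B"
    using wf_diag_notin_rest[OF assms(1), of A "[x]" "B @ [y] @ C"]
      wf_diag_notin_rest[OF assms(1), of "A @ [x] @ B" "[y]" C] xy w by auto
  have "walk s w' = walk s w"
    unfolding w w' by (simp only: fold_append walk_bar_flip_bar)
  then have base: "base_label s w' = base_label s w" by (rule base_label_cong)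
  have ind_c: "gauss_ind s w' c = gauss_ind s w c"
    using xy fresh unfolding gauss_ind_def base by (auto simp: w w' walk_to_append add.commute)
  have ind_other: "gauss_ind s w' k = gauss_ind s w k" if "k \<noteq> c" for k
  proof -
    have "gauss_ind s ((A @ [Bar, flip_ev x, Bar] @ B) @ [Bar, flip_ev y, Bar] @ C) k
        = gauss_ind s ((A @ [Bar, flip_ev x, Bar] @ B) @ [y] @ C) k"
      and "gauss_ind s (A @ [Bar, flip_ev x, Bar] @ (B @ [y] @ C)) k
        = gauss_ind s (A @ [x] @ (B @ [y] @ C)) k"
      using xy that by (intro gauss_ind_replace walk_bar_flip_bar; auto)+
    then show ?thesis by (simp add: w w')
  qed
  have "gauss_ind s w' k = gauss_ind s w k" for k
    using ind_c ind_other by (cases "k = c") auto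
  then show ?thesis
    using xy by (intro gauss_coef_cong) (auto simp: w w' crossings_def)
qed

lemma gauss_coef_T3_move:
  assumes "T3_move (w, s) (w', s')" "wf_diag w"
  shows "gauss_coef s' w' n = gauss_coef s w n"
proof -
  obtain A B C c x y where "s' = s" "(x, y) = (OverP c, UnderP c) \<or> (x, y) = (UnderP c, OverP c)"
    "w = A @ [x] @ B @ [y] @ C" "w' = A @ [Bar, flip_ev x, Bar] @ B @ [Bar, flip_ev y, Bar] @ C"
    using assms(1) unfolding T3_move_def by fastforce
  then show ?thesis using gauss_coef_flip_crossing[OF assms(2)] by blast
qed

definition reversed_block :: "(nat \<Rightarrow> bool) \<Rightarrow> event list \<Rightarrow> event list \<Rightarrow> event list \<Rightarrow> bool" where
  "reversed_block s w w' Y \<longleftrightarrow>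
     (\<exists>P Q P' Q'. w = P @ Y @ Q \<and> w' = P' @ rev Y @ Q' \<and> walk s P' = walk s P)"

definition block_shift :: "(nat \<Rightarrow> bool) \<Rightarrow> event list \<Rightarrow> event \<Rightarrow> int \<Rightarrow> int" where
  "block_shift s Y e t = walk_to s (rev Y) e t - walk_to s Y e t"

lemma reversed_blockI:
  "walk s P' = walk s P \<Longrightarrow> reversed_block s (P @ Y @ Q) (P' @ rev Y @ Q') Y"
  unfolding reversed_block_def by blast

lemma walk_to_reversed_block:
  assumes "wf_diag w" "wf_diag w'" "reversed_block s w w' Y" "e \<in> set Y" "e \<noteq> Bar"
  obtains P where "walk_to s w e = walk_to s Y e \<circ> walk s P"
    "walk_to s w' e = walk_to s (rev Y) e \<circ> walk s P"
proof -
  obtain P Q P' Q' where w: "w = P @ Y @ Q" "w' = P' @ rev Y @ Q'" "walk s P' = walk s P"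
    using assms(3) unfolding reversed_block_def by blast
  have "e \<notin> set P" "e \<notin> set P'"
    using wf_diag_notin_rest(1)[OF assms(1) w(1)] wf_diag_notin_rest(1)[OF assms(2) w(2)] assms(4,5)
    by auto
  then show ?thesis using that[of P] assms(4) w by (simp add: walk_to_append)
qed

lemma gauss_ind_reversed_blocks:
  assumes "wf_diag w" "wf_diag w'" "walk s w' = walk s w"
    and "reversed_block s w w' Y1" "OverP k \<in> set Y1"
    and "reversed_block s w w' Y2" "UnderP k \<in> set Y2"
    and "\<And>t t'. block_shift s Y1 (OverP k) t = block_shift s Y2 (UnderP k) t'"
  shows "gauss_ind s w' k = gauss_ind s w k"
proof -
  obtain P1 where P1: "walk_to s w (OverP k) = walk_to s Y1 (OverP k) \<circ> walk s P1"
    "walk_to s w' (OverP k) = walk_to s (rev Y1) (OverP k) \<circ> walk s P1"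
    using walk_to_reversed_block[OF assms(1,2,4,5)] by blast
  obtain P2 where P2: "walk_to s w (UnderP k) = walk_to s Y2 (UnderP k) \<circ> walk s P2"
    "walk_to s w' (UnderP k) = walk_to s (rev Y2) (UnderP k) \<circ> walk s P2"
    using walk_to_reversed_block[OF assms(1,2,6,7)] by blast
  show ?thesis
    using assms(8)[of "walk s P1 (base_label s w)" "walk s P2 (base_label s w)"]
    unfolding gauss_ind_def base_label_cong[OF assms(3)] P1 P2 block_shift_def by simp
qed

lemma walk_reverse_blocks:
  assumes "walk s (rev X1) = walk s X1" "walk s (rev X2) = walk s X2" "walk s (rev X3) = walk s X3"
    and w: "w = A @ X1 @ B @ X2 @ C @ X3 @ E"
    and w': "w' = A @ rev X1 @ B @ rev X2 @ C @ rev X3 @ E"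
  shows "walk s w' = walk s w"
    and "e \<notin> set X1 \<Longrightarrow> e \<notin> set X2 \<Longrightarrow> e \<notin> set X3 \<Longrightarrow> walk_to s w' e = walk_to s w e"
    and "Y \<in> {X1, X2, X3} \<Longrightarrow> reversed_block s w w' Y"
proof -
  show "walk s w' = walk s w" by (simp add: w w' assms(1-3))
  show "walk_to s w' e = walk_to s w e" if "e \<notin> set X1" "e \<notin> set X2" "e \<notin> set X3"
    using that by (simp add: w w' walk_to_append assms(1-3))
  have "reversed_block s w w' X1"
    using reversed_blockI[of s A A X1 "B @ X2 @ C @ X3 @ E" "B @ rev X2 @ C @ rev X3 @ E"]
    by (simp add: w w')
  moreover have "reversed_block s w w' X2"
    using reversed_blockI[of s "A @ rev X1 @ B" "A @ X1 @ B" X2 "C @ X3 @ E" "C @ rev X3 @ E"]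
    by (simp add: w w' assms(1))
  moreover have "reversed_block s w w' X3"
    using reversed_blockI[of s "A @ rev X1 @ B @ rev X2 @ C" "A @ X1 @ B @ X2 @ C" X3 E E]
    by (simp add: w w' assms(1,2))
  ultimately show "Y \<in> {X1, X2, X3} \<Longrightarrow> reversed_block s w w' Y" by blast
qed

lemma walk_rev_pair:
  assumes "e1 \<noteq> Bar" "e2 \<noteq> Bar"
  shows "walk s (rev [e1, e2]) = walk s [e1, e2]"
  using assms by (cases e1; cases e2) (auto simp: fun_eq_iff)

lemma R3_pairs_blocks:
  assumes "R3_pairs s e a b c = (pT, pM, pB)"
  shows "set pT = {OverP a, OverP b}" "set pM = {UnderP a, OverP c}"
    "set pB = {UnderP b, UnderP c}"
    and "walk s (rev pT) = walk s pT" "walk s (rev pM) = walk s pM" "walk s (rev pB) = walk s pB"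
proof -
  have pT: "pT = (if e = - wr s b then [OverP a, OverP b] else [OverP b, OverP a])"
    and pM: "pM = (if e = - wr s c then [UnderP a, OverP c] else [OverP c, UnderP a])"
    and pB: "pB = (if e = - (wr s a * wr s b * wr s c) then [UnderP b, UnderP c]
                   else [UnderP c, UnderP b])"
    using assms by (auto simp: R3_pairs_def)
  show "set pT = {OverP a, OverP b}" "set pM = {UnderP a, OverP c}"
    "set pB = {UnderP b, UnderP c}"
    by (auto simp: pT pM pB)
  show "walk s (rev pT) = walk s pT" "walk s (rev pM) = walk s pM" "walk s (rev pB) = walk s pB"
    unfolding pT pM pB by (auto simp only: walk_rev_pair event.distinct simp_thms split: if_split)
qed

lemma R3_pairs_distinct:
  assumes "R3_pairs s e a b c = (pT, pM, pB)"
    and "\<And>x. x \<noteq> Bar \<Longrightarrow> count_list pT x + count_list pM x + count_list pB x \<le> 1"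
  shows "a \<noteq> b" "a \<noteq> c" "b \<noteq> c"
  using assms(2)[of "OverP a"] assms(2)[of "OverP b"] assms(1)
  by (auto simp: R3_pairs_def split: if_splits)

text \<open>The order conditions in the definition of R3_pairs are exactly what makes the two
  passages of each of the three crossings move by the same amount.\<close>
lemma R3_pairs_block_shift:
  assumes "R3_pairs s e a b c = (pT, pM, pB)" "e \<in> {1, -1}" "a \<noteq> b" "a \<noteq> c" "b \<noteq> c"
  shows "block_shift s pT (OverP a) t = block_shift s pM (UnderP a) t'"
    and "block_shift s pT (OverP b) t = block_shift s pB (UnderP b) t'"
    and "block_shift s pM (OverP c) t = block_shift s pB (UnderP c) t'"
  using assms by (auto simp: R3_pairs_def block_shift_def wr_def)

lemma gauss_coef_R3_move:
  assumes "R3_move (w, s) (w', s')" "wf_diag w" "wf_diag w'"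
  shows "gauss_coef s' w' n = gauss_coef s w n"
proof -
  obtain e a b c pT pM pB A B C E X1 X2 X3 where s: "s' = s" and e: "e \<in> {1, -1}"
    and p: "R3_pairs s e a b c = (pT, pM, pB)"
    and X: "(X1, X2, X3) \<in> {(pT, pM, pB), (pT, pB, pM), (pM, pT, pB),
                             (pM, pB, pT), (pB, pT, pM), (pB, pM, pT)}"
    and w: "w = A @ X1 @ B @ X2 @ C @ X3 @ E"
    and w': "w' = A @ rev X1 @ B @ rev X2 @ C @ rev X3 @ E"
    using assms(1) unfolding R3_move_def fst_conv snd_conv by blast
  note sets = R3_pairs_blocks(1-3)[OF p]
  have "walk s (rev X1) = walk s X1" "walk s (rev X2) = walk s X2" "walk s (rev X3) = walk s X3"
    using X R3_pairs_blocks(4-6)[OF p] by auto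
  note blocks = walk_reverse_blocks[OF this w w']
  have bT: "reversed_block s w w' pT" and bM: "reversed_block s w w' pM"
    and bB: "reversed_block s w w' pB"
    using blocks(3) X by auto
  have mem: "OverP a \<in> set pT" "OverP b \<in> set pT" "UnderP a \<in> set pM"
    "OverP c \<in> set pM" "UnderP b \<in> set pB" "UnderP c \<in> set pB"
    by (simp_all add: sets)
  have "count_list pT x + count_list pM x + count_list pB x \<le> 1" if "x \<noteq> Bar" for x
    using wf_diag_count_le_1[OF assms(2) that] X by (auto simp: w)
  note shift = R3_pairs_block_shift[OF p e R3_pairs_distinct[OF p this]]
  have "gauss_ind s w' k = gauss_ind s w k" for k
  proof (cases "k \<in> {a, b, c}")
    case True
    note reverse = gauss_ind_reversed_blocks[OF assms(2,3) blocks(1)]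
    show ?thesis
      using True reverse[OF bT mem(1) bM mem(3) shift(1)] reverse[OF bT mem(2) bB mem(5) shift(2)]
        reverse[OF bM mem(4) bB mem(6) shift(3)]
      by auto
  next
    case False
    then have "OverP k \<notin> set Y" "UnderP k \<notin> set Y" if "Y \<in> {X1, X2, X3}" for Y
      using that X sets by auto
    then show ?thesis
      unfolding gauss_ind_def base_label_cong[OF blocks(1)] by (simp add: blocks(2))
  qed
  then show ?thesis
    unfolding s using X by (intro gauss_coef_cong) (auto simp: w w' crossings_def)
qed

lemma nbars_map_ev: "nbars (map (map_ev f) w) = nbars w"
proof -
  have "map_ev f e = Bar \<longleftrightarrow> e = Bar" for e by (cases e) auto
  then show ?thesis unfolding nbars_def by (induction w) auto
qed

lemma tw_step_nbars_parity:
  assumes "tw_step (w, s) (w', s')"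
  shows "even (nbars w') = even (nbars w)"
  using assms nbars_map_ev[of _ w]
  unfolding tw_step_def triv_move_def R1_move_def R2_move_def R3_move_def T2_move_def T3_move_def
  by (auto simp: nbars_def count_list_rotate1)

lemma tw_step_gauss_coef:
  assumes "tw_step (w, s) (w', s')" "odd (nbars w)"
  shows "gauss_coef s' w' n = gauss_coef s w n"
proof -
  have wf: "wf_diag w" "wf_diag w'" using assms(1) by (simp_all add: tw_step_def)
  have "triv_move (w, s) (w', s') \<or> R1_move (w, s) (w', s') \<or> R2_move (w, s) (w', s') \<or>
      R3_move (w, s) (w', s') \<or> T2_move (w, s) (w', s') \<or> T3_move (w, s) (w', s')"
    using assms(1) by (simp add: tw_step_def)
  then show ?thesis
  proof (elim disjE)
    assume "triv_move (w, s) (w', s')"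
    then show ?thesis unfolding triv_move_def
      using gauss_coef_rotate1[OF wf(1) assms(2)] gauss_coef_rename gauss_coef_agree[OF wf(1)]
      by auto
  next
    assume "R1_move (w, s) (w', s')"
    then show ?thesis by (rule gauss_coef_R1_move[OF _ wf(1)])
  next
    assume "R2_move (w, s) (w', s')"
    then show ?thesis by (rule gauss_coef_R2_move[OF _ wf(1)])
  next
    assume "R3_move (w, s) (w', s')"
    then show ?thesis by (rule gauss_coef_R3_move[OF _ wf])
  next
    assume "T2_move (w, s) (w', s')"
    then show ?thesis by (rule gauss_coef_T2_move)
  next
    assume "T3_move (w, s) (w', s')"
    then show ?thesis by (rule gauss_coef_T3_move[OF _ wf(1)])
  qed
qed

lemma tw_equiv_acoef:
  assumes "tw_equiv D D'"
  shows "(wf_diag (fst D) \<and> odd (nbars (fst D))) = (wf_diag (fst D') \<and> odd (nbars (fst D')))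
    \<and> (wf_diag (fst D) \<and> odd (nbars (fst D)) \<longrightarrow> acoef D n = acoef D' n)"
  using assms
proof (induction rule: tw_equiv.induct)
  case (step D D')
  obtain w s w' s' where D: "D = (w, s)" "D' = (w', s')" by fastforce
  have wf: "wf_diag w" "wf_diag w'" using step D by (simp_all add: tw_step_def)
  have "odd (nbars w') = odd (nbars w)"
    using tw_step_nbars_parity step D by simp
  moreover have "acoef (w, s) n = acoef (w', s') n" if "odd (nbars w)"
    using that calculation acoef_eq_gauss_coef wf tw_step_gauss_coef step D by simp
  ultimately show ?case using wf D by auto
qed auto

theorem theorem7p4:
  fixes D D' :: diagram and n :: int
  assumes "wf_diag (fst D)"
    and "odd (nbars (fst D))"
    and "tw_equiv D D'"
  shows "acoef D n = acoef D' n"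
  using tw_equiv_acoef[OF assms(3)] assms(1,2) by blast

end
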